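(* Assume $r_k\ge4/7$ for all $k\ge2$, $\kappa\ge\|f'\|_{C[-\beta,\beta]}$, $\|\phi^0\|_\infty\le\beta$, and $$\tau_1\le\min\Big\{\Big(\frac{4}{11\varsigma m(\kappa+4\varepsilon^2/h^2)\Gamma(2-\alpha)}\Big)^{1/\alpha},\Big(\frac{4}{11\kappa(1-\varsigma)m\Gamma(2-\alpha)}\Big)^{1/\alpha}\Big\}.$$ If moreover for all $n\ge1$ $$\tau_n\le\Big(\frac{4}{11(1-\varsigma)m(4\varepsilon^2/h^2+\kappa K_2)\Gamma(2-\alpha)}\Big)^{1/\alpha},$$ then the solution of the (balanced) $L2$-$1_\sigma$-sESAV scheme satisfies $\|\phi^n\|_\infty\le\beta$ for all $n\ge1$.
   Context: Setting: $\Omega=(0,L)^2$ with periodic boundary conditions; constants $m>0$, $\varepsilon>0$, $\alpha\in(0,1)$, and $\varsigma:=\alpha/2$. The nonlinearity $f=-F'$ is one of: (double-well) $F(\phi)=\frac14(1-\phi^2)^2$, $f(\phi)=\phi-\phi^3$, with $\beta=1$; or (Flory–Huggins) $F(\phi)=\frac{\theta}{2}[(1+\phi)\ln(1+\phi)+(1-\phi)\ln(1-\phi)]-\frac{\theta_c}{2}\phi^2$, $f(\phi)=\frac{\theta}{2}\ln\frac{1-\phi}{1+\phi}+\theta_c\phi$ on $(-1,1)$, with $\theta_c>\theta>0$ and $\beta\in(0,1)$ the positive root of $f$. In both cases $f(\pm\beta)=0$. Spatial discretization: $M\in\mathbb N$, $h=L/M$; $\mathbb V_h$ is the space of real grid functions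 $v=\{v_{ij}\}_{i,j\in\mathbb Z}$ that are $M$-periodic in each index; $\langle v,w\rangle=h^2\sum_{i,j=1}^Mv_{ij}w_{ij}$, $\|v\|_\infty=\max_{1\le i,j\le M}|v_{ij}|$; $\Delta_hv_{ij}=h^{-2}(v_{i+1,j}+v_{i-1,j}+v_{i,j+1}+v_{i,j-1}-4v_{ij})$. Scalar functions act on grid functions pointwise. $E_{1h}[v]=\langle F(v),1\rangle$ and $g_h(v,w)=\exp(w)/\exp(E_{1h}[v])$ for $v\in\mathbb V_h$ (with $\|v\|_\infty<1$ in the Flory–Huggins case) and $w\in\mathbb R$. Auxiliary functional: $V:\mathbb R\to\mathbb R$ satisfies (A1) $V\in C^1(\mathbb R)\cap W^{2,\infty}(\mathbb R)$, $V(1)=1$, $V'(1)=0$, $|V'|\le K_1$; (A2) $0\le V\le K_2$ for a constant $K_2>0$; (A3) $|z_1-1|\le|z_2-1|$ implies $|V(z_1)-1|\le|V(z_2)-1|$. Time grid: $0=t_0<t_1<\dots<t_N=T$, $\tau_k=t_k-t_{k-1}$, $r_k=\tau_k/\tau_{k-1}$ ($k\ge2$), $\nabla_\tau v^k=v^k-v^{k-1}$, $\mathbb D_\tau v^k=\nabla_\tau v^k/\tau_k$, $\omega_\mu(t)=t^{\mu-1}/\Gamma(\mu)$. Constant $\kappa\ge0$; data $\phi^0\in\mathbb V_h$, $R^0\in\mathbb R$. For $n\ge2$ the predicted solution is $\hat\phi^n=\min\{\max\{(1+r_n)\phi^{n-1}-r_n\phi^{n-2},-\beta\},\beta\}$ (pointwise).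 $L2$-$1_\sigma$ discretization: $t_{k-\varsigma}=(1-\varsigma)t_k+\varsigma t_{k-1}$, $t_{k-1/2}=(t_k+t_{k-1})/2$; $a^{(n)}_{n-k}=\frac1{\tau_k}\int_{t_{k-1}}^{\min\{t_k,t_{n-\varsigma}\}}\omega_{1-\alpha}(t_{n-\varsigma}-s)\,ds$ ($1\le k\le n$), $b^{(n)}_{n-k}=\frac{2}{\tau_k(\tau_k+\tau_{k+1})}\int_{t_{k-1}}^{t_k}(s-t_{k-1/2})\omega_{1-\alpha}(t_{n-\varsigma}-s)\,ds$ ($1\le k\le n-1$); $B^{(1)}_0=a^{(1)}_0$, and for $n\ge2$: $B^{(n)}_0=a^{(n)}_0+b^{(n)}_1/r_n$, $B^{(n)}_{n-k}=a^{(n)}_{n-k}+b^{(n)}_{n-k+1}/r_k-b^{(n)}_{n-k}$ for $2\le k\le n-1$, $B^{(n)}_{n-1}=a^{(n)}_{n-1}-b^{(n)}_{n-1}$; $\tilde{\mathbb D}^\alpha_\tau v^n=\sum_{k=1}^nB^{(n)}_{n-k}\nabla_\tau v^k$; $w^{k-\varsigma}=(1-\varsigma)w^k+\varsigma w^{k-1}$. Balanced $L2$-$1_\sigma$-sESAV scheme: $\hat\phi^1\in\mathbb V_h$ with $\|\hat\phi^1\|_\infty\le\beta$ solves $B^{(1)}_0(\hat\phi^1-\phi^0)=m(\varepsilon^2\Delta_h\hat\phi^{1-\varsigma}+f(\hat\phi^{1-\varsigma}))$; for $n\ge2$, $\hat\phi^n$ is the predicted solution above. For $n\ge1$ set $\hat\phi^{n-\varsigma}=(1-\varsigma)\hat\phi^n+\varsigma\phi^{n-1}$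 and $V^{n-\varsigma}=V(g_h(\hat\phi^{n-\varsigma},R^{n-1}))$, and define $(\phi^n,R^n)$ by $\tilde{\mathbb D}^\alpha_\tau\phi^n=m(\varepsilon^2\Delta_h\phi^{n-\varsigma}+V^{n-\varsigma}f(\hat\phi^{n-\varsigma})-\kappa V^{n-\varsigma}(\phi^{n-\varsigma}-\hat\phi^{n-\varsigma}))$ and $\mathbb D_\tau R^n=V^{n-\varsigma}\langle-f(\hat\phi^{n-\varsigma})+\kappa(\phi^{n-\varsigma}-\hat\phi^{n-\varsigma}),\mathbb D_\tau\phi^n\rangle$. *)

theory Defs
  imports "HOL-Analysis.Analysis"
begin

type_synonym grid = "int \<Rightarrow> int \<Rightarrow> real"

definition gridspace :: "nat \<Rightarrow> grid set" where
  "gridspace M = {v. \<forall>i j. v (i + int M) j = v i j \<and> v i (j + int M) = v i j}"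

definition gip :: "real \<Rightarrow> nat \<Rightarrow> grid \<Rightarrow> grid \<Rightarrow> real" where
  "gip h M v w = h^2 * (\<Sum>i\<in>{1..int M}. \<Sum>j\<in>{1..int M}. v i j * w i j)"

definition gsup :: "nat \<Rightarrow> grid \<Rightarrow> real" where
  "gsup M v = Max ((\<lambda>(i,j). \<bar>v i j\<bar>) ` ({1..int M} \<times> {1..int M}))"

definition glap :: "real \<Rightarrow> grid \<Rightarrow> grid" where
  "glap h v i j = (v (i+1) j + v (i-1) j + v i (j+1) + v i (j-1) - 4 * v i j) / h^2"

definition E1h :: "(real \<Rightarrow> real) \<Rightarrow> real \<Rightarrow> nat \<Rightarrow> grid \<Rightarrow> real" where
  "E1h F h M v = gip h M (\<lambda>i j. F (v i j)) (\<lambda>i j. 1)"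

definition gh :: "(real \<Rightarrow> real) \<Rightarrow> real \<Rightarrow> nat \<Rightarrow> grid \<Rightarrow> real \<Rightarrow> real" where
  "gh F h M v w = exp w / exp (E1h F h M v)"

definition dwF :: "real \<Rightarrow> real" where "dwF x = (1 - x^2)^2 / 4"
definition dwf :: "real \<Rightarrow> real" where "dwf x = x - x^3"
definition fhF :: "real \<Rightarrow> real \<Rightarrow> real \<Rightarrow> real" where
  "fhF \<theta> \<theta>c x = \<theta>/2 * ((1+x) * ln (1+x) + (1-x) * ln (1-x)) - \<theta>c/2 * x^2"
definition fhf :: "real \<Rightarrow> real \<Rightarrow> real \<Rightarrow> real" where
  "fhf \<theta> \<theta>c x = \<theta>/2 * ln ((1-x)/(1+x)) + \<theta>c * x"

definition tau :: "(nat \<Rightarrow> real) \<Rightarrow> nat \<Rightarrow> real" where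
  "tau t k = t k - t (k-1)"
definition rr :: "(nat \<Rightarrow> real) \<Rightarrow> nat \<Rightarrow> real" where
  "rr t k = tau t k / tau t (k-1)"
definition omega :: "real \<Rightarrow> real \<Rightarrow> real" where
  "omega \<mu> x = x powr (\<mu> - 1) / Gamma \<mu>"
(* t_{n-sigma} with sigma = alpha/2 *)
definition tsig :: "(nat \<Rightarrow> real) \<Rightarrow> real \<Rightarrow> nat \<Rightarrow> real" where
  "tsig t \<alpha> n = (1 - \<alpha>/2) * t n + (\<alpha>/2) * t (n-1)"

(* acoef t alpha n k = a^{(n)}_{n-k},  1 <= k <= n *)
definition acoef :: "(nat \<Rightarrow> real) \<Rightarrow> real \<Rightarrow> nat \<Rightarrow> nat \<Rightarrow> real" where
  "acoef t \<alpha> n k = (1 / tau t k) *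
     integral {t (k-1) .. min (t k) (tsig t \<alpha> n)} (\<lambda>s. omega (1-\<alpha>) (tsig t \<alpha> n - s))"

(* bcoef t alpha n k = b^{(n)}_{n-k},  1 <= k <= n-1 *)
definition bcoef :: "(nat \<Rightarrow> real) \<Rightarrow> real \<Rightarrow> nat \<Rightarrow> nat \<Rightarrow> real" where
  "bcoef t \<alpha> n k = 2 / (tau t k * (tau t k + tau t (k+1))) *
     integral {t (k-1) .. t k} (\<lambda>s. (s - (t k + t (k-1)) / 2) * omega (1-\<alpha>) (tsig t \<alpha> n - s))"

(* Bcoef t alpha n k = B^{(n)}_{n-k},  1 <= k <= n *)
definition Bcoef :: "(nat \<Rightarrow> real) \<Rightarrow> real \<Rightarrow> nat \<Rightarrow> nat \<Rightarrow> real" where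
  "Bcoef t \<alpha> n k =
     (if n = 1 then acoef t \<alpha> 1 1
      else if k = n then acoef t \<alpha> n n + bcoef t \<alpha> n (n-1) / rr t n
      else if k = 1 then acoef t \<alpha> n 1 - bcoef t \<alpha> n 1
      else acoef t \<alpha> n k + bcoef t \<alpha> n (k-1) / rr t k - bcoef t \<alpha> n k)"

definition Dcaputo :: "(nat \<Rightarrow> real) \<Rightarrow> real \<Rightarrow> (nat \<Rightarrow> grid) \<Rightarrow> nat \<Rightarrow> grid" where
  "Dcaputo t \<alpha> v n i j = (\<Sum>k=1..n. Bcoef t \<alpha> n k * (v k i j - v (k-1) i j))"

definition clip :: "real \<Rightarrow> real \<Rightarrow> real" where
  "clip \<beta> x = min (max x (-\<beta>)) \<beta>"

end

theory Submission
  imports Defs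
begin

text \<open>Induction on \<open>n\<close> via a discrete maximum principle. At a node where \<open>\<phi>^n\<close> is maximal, the
  discrete Laplacian of \<open>\<phi>^n\<close> is nonpositive, that of \<open>\<phi>^(n-1)\<close> is at most \<open>4(\<beta> - \<phi>^(n-1))/h\<^sup>2\<close>,
  and \<open>f(z) + \<kappa> z \<le> \<kappa> \<beta>\<close> on \<open>[-\<beta>, \<beta>]\<close> because \<open>\<kappa>\<close> dominates \<open>|f'|\<close> and \<open>f(\<plusminus>\<beta>) = 0\<close>. The history
  part of the L2-1\<sigma> derivative is handled by summation by parts, which needs the weights
  \<open>B^(n)_(n-k)\<close> to be nonnegative and nondecreasing in \<open>k\<close>, the newest one exceeding its predecessor
  by \<open>m \<sigma> (4 \<epsilon>\<^sup>2/h\<^sup>2 + \<kappa> K\<^sub>2)\<close>. These follow from writing each coefficient as an integral of the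
  kernel \<open>\<omega>_(1-\<alpha>)(t_(n-\<sigma>) - s)\<close> against a linear weight and integrating by parts twice: convexity
  of the kernel, \<open>r_k \<ge> 4/7\<close> and the step-size restriction make every remainder signed. The lower
  bound is the same argument applied to \<open>-\<phi>\<close>.\<close>

section \<open>The kernel\<close>

definition kern :: "real \<Rightarrow> real \<Rightarrow> real \<Rightarrow> real" where
  "kern a T s = (T - s) powr (-a) / Gamma (1 - a)"

definition kern' :: "real \<Rightarrow> real \<Rightarrow> real \<Rightarrow> real" where
  "kern' a T s = a * (T - s) powr (-a - 1) / Gamma (1 - a)"

definition kern'' :: "real \<Rightarrow> real \<Rightarrow> real \<Rightarrow> real" where
  "kern'' a T s = a * (a + 1) * (T - s) powr (-a - 2) / Gamma (1 - a)"

lemma omega_eq_kern: "omega (1 - a) (T - s) = kern a T s"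
  unfolding omega_def kern_def by simp

lemma Gamma_one_minus_pos: "a < 1 \<Longrightarrow> 0 < Gamma (1 - a :: real)"
  by (intro Gamma_real_pos) simp

lemma Gamma_two_minus: "a < 1 \<Longrightarrow> Gamma (2 - a) = (1 - a) * Gamma (1 - a :: real)"
  using Gamma_plus1[of "1 - a"] nonpos_Ints_nonpos[of "1 - a"] by (force simp: algebra_simps)

lemma Gamma_two_minus_pos: "a < 1 \<Longrightarrow> 0 < Gamma (2 - a :: real)"
  by (intro Gamma_real_pos) simp

lemma has_real_derivative_powr_diff:
  "s < T \<Longrightarrow> ((\<lambda>s. (T - s) powr e) has_real_derivative (- e * (T - s) powr (e - 1))) (at s)"
  by (rule derivative_eq_intros refl | simp)+

lemma kern_has_derivative: "s < T \<Longrightarrow> (kern a T has_real_derivative kern' a T s) (at s)"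
  using DERIV_cdivide[OF has_real_derivative_powr_diff[of s T "-a"], of "Gamma (1 - a)"]
  unfolding kern_def kern'_def by (simp add: algebra_simps)

lemma kern'_has_derivative: "s < T \<Longrightarrow> (kern' a T has_real_derivative kern'' a T s) (at s)"
  using DERIV_cdivide[OF DERIV_cmult[OF has_real_derivative_powr_diff[of s T "-a-1"], of a],
      of "Gamma (1 - a)"]
  unfolding kern'_def kern''_def by (simp add: algebra_simps)

lemma kern_continuous_on: "a < 1 \<Longrightarrow> d < T \<Longrightarrow> continuous_on {c..d} (kern a T)"
  unfolding kern_def using Gamma_one_minus_pos[of a]
  by (auto intro!: continuous_intros simp: less_imp_neq[symmetric])

lemma kern''_continuous_on: "a < 1 \<Longrightarrow> d < T \<Longrightarrow> continuous_on {c..d} (kern'' a T)"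
  unfolding kern''_def using Gamma_one_minus_pos[of a]
  by (auto intro!: continuous_intros simp: less_imp_neq[symmetric])

lemma kern_nonneg: "a < 1 \<Longrightarrow> 0 \<le> kern a T s"
  unfolding kern_def using Gamma_one_minus_pos[of a] by simp

lemma kern'_nonneg: "0 < a \<Longrightarrow> a < 1 \<Longrightarrow> 0 \<le> kern' a T s"
  unfolding kern'_def using Gamma_one_minus_pos[of a] by simp

lemma kern''_nonneg: "0 < a \<Longrightarrow> a < 1 \<Longrightarrow> 0 \<le> kern'' a T s"
  unfolding kern''_def using Gamma_one_minus_pos[of a] by simp

text \<open>The kernel is convex, so the remainder \<open>\<integral> kern'' * Q\<close> can be
  dropped as soon as the double antiderivative \<open>Q\<close> of the weight is nonnegative.\<close>
lemma kern_linear_weight_integral_ge: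
  fixes a T c d h1 h2 g0 g1 :: real
  assumes a: "0 < a" "a < 1" and cd: "c \<le> d" "d < T"
    and Q_nonneg: "\<And>y. 0 \<le> y \<Longrightarrow> y \<le> d - c \<Longrightarrow> 0 \<le> h2 + h1*y + g0*y^2/2 + g1*y^3/6"
  shows "integral {c..d} (\<lambda>s. kern a T s * (g0 + g1*(d-s))) \<ge>
     kern a T c * (h1 + g0*(d-c) + g1*(d-c)^2/2)
     + kern' a T c * (h2 + h1*(d-c) + g0*(d-c)^2/2 + g1*(d-c)^3/6)
     - kern a T d * h1 - kern' a T d * h2"
proof -
  define P where "P s = h1 + g0*(d-s) + g1*(d-s)^2/2" for s
  define Q where "Q s = h2 + h1*(d-s) + g0*(d-s)^2/2 + g1*(d-s)^3/6" for s
  define G where "G s = - (kern a T s * P s) - kern' a T s * Q s" for s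
  have dP: "(P has_real_derivative (- (g0 + g1*(d-s)))) (at s)" for s
    unfolding P_def
    by (rule derivative_eq_intros refl | simp)+ (simp add: algebra_simps power2_eq_square)
  have dQ: "(Q has_real_derivative (- P s)) (at s)" for s
    unfolding Q_def P_def by (rule derivative_eq_intros refl | simp)+
      (simp add: algebra_simps power2_eq_square power3_eq_cube)
  have dG: "(G has_real_derivative (kern a T s * (g0 + g1*(d-s)) - kern'' a T s * Q s)) (at s)"
    if "s \<le> d" for s
  proof -
    have "s < T" using that cd by simp
    from DERIV_diff[OF DERIV_minus[OF DERIV_mult[OF kern_has_derivative[OF this, where a=a] dP]]
        DERIV_mult[OF kern'_has_derivative[OF this, where a=a] dQ]]
    show ?thesis unfolding G_def by (simp add: algebra_simps)
  qed
  have ftc: "((\<lambda>s. kern a T s * (g0 + g1*(d-s)) - kern'' a T s * Q s)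
      has_integral (G d - G c)) {c..d}"
    using dG cd(1) by (intro fundamental_theorem_of_calculus)
      (auto simp: has_real_derivative_iff_has_vector_derivative[symmetric] intro: DERIV_subset)
  have Q_int: "(\<lambda>s. kern'' a T s * Q s) integrable_on {c..d}"
    unfolding Q_def using a cd
    by (intro integrable_continuous_interval continuous_intros kern''_continuous_on) auto
  have "0 \<le> integral {c..d} (\<lambda>s. kern'' a T s * Q s)"
  proof (rule integral_nonneg[OF Q_int])
    fix s assume "s \<in> {c..d}"
    then have "0 \<le> Q s" unfolding Q_def using Q_nonneg[of "d-s"] by auto
    then show "0 \<le> kern'' a T s * Q s" using kern''_nonneg[OF a] by simp
  qed
  moreover have "integral {c..d} (\<lambda>s. kern a T s * (g0 + g1*(d-s))) =
      (G d - G c) + integral {c..d} (\<lambda>s. kern'' a T s * Q s)"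
    using integral_add[OF has_integral_integrable[OF ftc] Q_int] integral_unique[OF ftc] by simp
  moreover have "G d - G c = kern a T c * (h1 + g0*(d-c) + g1*(d-c)^2/2)
      + kern' a T c * (h2 + h1*(d-c) + g0*(d-c)^2/2 + g1*(d-c)^3/6)
      - kern a T d * h1 - kern' a T d * h2"
    unfolding G_def P_def Q_def by simp
  ultimately show ?thesis by linarith
qed

definition kern_mass :: "real \<Rightarrow> real \<Rightarrow> real \<Rightarrow> real \<Rightarrow> real" where
  "kern_mass a T c d = integral {c..d} (kern a T)"

definition kern_moment :: "real \<Rightarrow> real \<Rightarrow> real \<Rightarrow> real \<Rightarrow> real" where
  "kern_moment a T c d = integral {c..d} (\<lambda>s. (s - (d + c)/2) * kern a T s)"

lemma kern_linear_weight_integral: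
  assumes "a < 1" "d < T"
  shows "integral {c..d} (\<lambda>s. kern a T s * (g0 + g1*(d-s))) =
    (g0 + g1*(d-c)/2) * kern_mass a T c d - g1 * kern_moment a T c d"
proof -
  have "((\<lambda>s. (g0 + g1*(d-c)/2) * kern a T s - g1 * ((s - (d + c)/2) * kern a T s)) has_integral
        ((g0 + g1*(d-c)/2) * kern_mass a T c d - g1 * kern_moment a T c d)) {c..d}"
    unfolding kern_mass_def kern_moment_def using assms
    by (intro has_integral_diff has_integral_mult_right integrable_integral
        integrable_continuous_interval continuous_intros kern_continuous_on)
  moreover have "(\<lambda>s. (g0 + g1*(d-c)/2) * kern a T s - g1 * ((s - (d + c)/2) * kern a T s))
      = (\<lambda>s. kern a T s * (g0 + g1*(d-s)))"
    by (rule ext) (simp add: field_simps)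
  ultimately show ?thesis by (simp add: integral_unique)
qed

lemma kern_mass_sub_moment_ge:
  assumes a: "0 < a" "a < 1" and cd: "c < d" "d < T" "d - c = r" and u: "0 < u"
  shows "kern_mass a T c d / r - 2 * kern_moment a T c d / (r*(r+u)) \<ge>
    kern a T c + kern' a T c * (r*(3*u+2*r)/(6*(r+u)))"
proof -
  have r: "r > 0" using cd by simp
  define g0 where "g0 = u/(r*(r+u))"
  define g1 where "g1 = 2/(r*(r+u))"
  have "0 \<le> g0" "0 \<le> g1" using r u unfolding g0_def g1_def by auto
  then have "integral {c..d} (\<lambda>s. kern a T s * (g0 + g1*(d-s))) \<ge>
     kern a T c * (0 + g0*r + g1*r^2/2) + kern' a T c * (0 + 0*r + g0*r^2/2 + g1*r^3/6)
     - kern a T d * 0 - kern' a T d * 0"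
    using kern_linear_weight_integral_ge[OF a _ cd(2), of c 0 0 g0 g1] cd by simp
  moreover have "g0*r + g1*r^2/2 = 1"
    unfolding g0_def g1_def using r u
    by (simp add: divide_simps power2_eq_square) (simp add: algebra_simps)
  moreover have "g0*r^2/2 + g1*r^3/6 = r*(3*u+2*r)/(6*(r+u))"
    unfolding g0_def g1_def using r u
    by (simp add: divide_simps power2_eq_square power3_eq_cube) (simp add: algebra_simps)
  moreover have "g0 + g1*r/2 = 1/r"
    unfolding g0_def g1_def using r u by (simp add: divide_simps) (simp add: algebra_simps)
  then have "integral {c..d} (\<lambda>s. kern a T s * (g0 + g1*(d-s)))
      = kern_mass a T c d / r - 2 * kern_moment a T c d / (r*(r+u))"
    unfolding kern_linear_weight_integral[OF a(2) cd(2)] cd(3) by (simp add: g1_def)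
  ultimately show ?thesis by simp
qed

lemma kern_moment_sub_mass_ge:
  assumes a: "0 < a" "a < 1" and cd: "c < d" "d < T" "d - c = q" and r: "0 < r" and H: "0 \<le> H"
  shows "- kern_mass a T c d / q + 2 * kern_moment a T c d / (q*r) \<ge>
    kern' a T c * (H + q/2 + q^2/(6*r)) - kern a T d - kern' a T d * H"
proof -
  have q: "q > 0" using cd by simp
  define g0 where "g0 = 1/r - 1/q"
  define g1 where "g1 = -2/(q*r)"
  have "0 \<le> H + 1*y + g0*y^2/2 + g1*y^3/6" if "0 \<le> y" "y \<le> q" for y
  proof -
    have "H + 1*y + g0*y^2/2 + g1*y^3/6 = H + y*(2*q - y)/(2*q) + y^2*(3*q - 2*y)/(6*q*r)"
      unfolding g0_def g1_def using q r by (simp add: field_simps power2_eq_square power3_eq_cube)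
    moreover have "0 \<le> y*(2*q - y)/(2*q)" "0 \<le> y^2*(3*q - 2*y)/(6*q*r)"
      using that q r by simp_all
    ultimately show ?thesis using H by linarith
  qed
  then have "integral {c..d} (\<lambda>s. kern a T s * (g0 + g1*(d-s))) \<ge>
     kern a T c * (1 + g0*q + g1*q^2/2) + kern' a T c * (H + 1*q + g0*q^2/2 + g1*q^3/6)
     - kern a T d * 1 - kern' a T d * H"
    using kern_linear_weight_integral_ge[OF a _ cd(2), of c H 1 g0 g1] cd by simp
  moreover have "kern a T c * (1 + g0*q + g1*q^2/2) = 0"
    unfolding g0_def g1_def using r q by (simp add: field_simps power2_eq_square)
  moreover have "kern' a T c * (H + 1*q + g0*q^2/2 + g1*q^3/6)
      = kern' a T c * (H + q/2 + q^2/(6*r))"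
    unfolding g0_def g1_def using r q
    by (simp add: divide_simps power2_eq_square power3_eq_cube) (simp add: algebra_simps)
  moreover have "integral {c..d} (\<lambda>s. kern a T s * (g0 + g1*(d-s)))
      = - kern_mass a T c d / q + 2 * kern_moment a T c d / (q*r)"
    unfolding kern_linear_weight_integral[OF a(2) cd(2)] cd(3) g0_def g1_def using r q
    by (simp add: field_simps)
  ultimately show ?thesis by linarith
qed

text \<open>This is where the step-ratio condition enters: \<open>p \<le> 7/4 q\<close> gives \<open>p\<^sup>3 \<le> 3 q\<^sup>2 (p + q)\<close>.\<close>
lemma kern_moment_le:
  assumes a: "0 < a" "a < 1" and cd: "c < d" "d < T" "d - c = p"
    and q: "0 < q" and pq: "p \<le> 7/4 * q" and H: "q/2 \<le> H"
  shows "2 * kern_moment a T c d / (q*(p+q)) \<le> kern' a T d * H"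
proof -
  have p: "p > 0" using cd by simp
  define g0 where "g0 = -p/(q*(p+q))"
  define g1 where "g1 = 2/(q*(p+q))"
  have "p^3 \<le> p*(7/4*q)*(7/4*q)"
    unfolding power3_eq_cube using p pq by (intro mult_mono) auto
  also have "\<dots> \<le> 3*q^2*(p+q)"
    using p q pq by (simp add: power2_eq_square algebra_simps)
  finally have p3: "p^3 \<le> 3*q^2*(p+q)" .
  have Q_nonneg: "0 \<le> H + 0*y + g0*y^2/2 + g1*y^3/6" if "0 \<le> y" "y \<le> p" for y
  proof -
    have "H + 0*y + g0*y^2/2 + g1*y^3/6 = H - y^2*(3*p - 2*y)/(6*q*(p+q))"
      unfolding g0_def g1_def using p q
      by (simp add: divide_simps power2_eq_square power3_eq_cube) (simp add: algebra_simps)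
    moreover have "y^2*(3*p - 2*y) \<le> p^3"
    proof -
      have "p^3 - y^2*(3*p - 2*y) = (p - y)^2 * (p + 2*y)"
        by (simp add: power2_eq_square power3_eq_cube algebra_simps)
      then show ?thesis using p that by (smt (verit) mult_nonneg_nonneg zero_le_power2)
    qed
    then have "y^2*(3*p - 2*y)/(6*q*(p+q)) \<le> p^3/(6*q*(p+q))"
      using p q by (intro divide_right_mono) auto
    moreover have "p^3/(6*q*(p+q)) \<le> q/2"
      using p3 p q by (simp add: divide_simps power2_eq_square)
    ultimately show ?thesis using H by linarith
  qed
  then have "integral {c..d} (\<lambda>s. kern a T s * (g0 + g1*(d-s))) \<ge>
     kern a T c * (0 + g0*p + g1*p^2/2) + kern' a T c * (H + 0*p + g0*p^2/2 + g1*p^3/6)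
     - kern a T d * 0 - kern' a T d * H"
    using kern_linear_weight_integral_ge[OF a _ cd(2), of c H 0 g0 g1] cd by simp
  moreover have "g0*p + g1*p^2/2 = 0"
    unfolding g0_def g1_def using p q by (simp add: divide_simps power2_eq_square)
  moreover have "0 \<le> kern' a T c * (H + 0*p + g0*p^2/2 + g1*p^3/6)"
    using Q_nonneg[of p] p kern'_nonneg[OF a] by simp
  moreover have "integral {c..d} (\<lambda>s. kern a T s * (g0 + g1*(d-s)))
      = - 2 * kern_moment a T c d / (q*(p+q))"
  proof -
    have "g0 + g1*p/2 = 0" unfolding g0_def g1_def using p q by (simp add: divide_simps)
    then show ?thesis
      unfolding kern_linear_weight_integral[OF a(2) cd(2)] cd(3) by (simp add: g1_def)
  qed
  ultimately show ?thesis by simp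
qed

lemma kern_mass_to_apex:
  assumes "a < 1" "c < T"
  shows "integral {c..T} (kern a T) = (T - c) powr (1 - a) / Gamma (2 - a)"
proof -
  define G where "G s = - ((T - s) powr (1 - a)) / Gamma (2 - a)" for s
  have "Gamma (2 - a) \<noteq> 0" using Gamma_two_minus_pos[OF assms(1)] by simp
  then have "continuous_on {c..T} G"
    unfolding G_def using assms by (intro continuous_intros continuous_on_powr') auto
  moreover have "(G has_vector_derivative kern a T s) (at s)" if "s \<in> {c<..<T}" for s
  proof -
    have "(G has_real_derivative (1 - a) * (T - s) powr (- a) / Gamma (2 - a)) (at s)"
      using DERIV_cdivide[OF DERIV_minus[OF has_real_derivative_powr_diff[of s T "1 - a"]],
          of "Gamma (2 - a)"] that
      unfolding G_def by (simp add: algebra_simps)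
    then show ?thesis
      unfolding kern_def Gamma_two_minus[OF assms(1)] using assms
      by (simp add: has_real_derivative_iff_has_vector_derivative)
  qed
  ultimately have "(kern a T has_integral (G T - G c)) {c..T}"
    using assms by (intro fundamental_theorem_of_calculus_interior) auto
  then show ?thesis using assms by (simp add: integral_unique G_def)
qed

section \<open>The L2-1\<sigma> coefficients\<close>

lemma tau_pos: "\<forall>k\<in>{1..N}. t (k-1) < t k \<Longrightarrow> 1 \<le> k \<Longrightarrow> k \<le> N \<Longrightarrow> 0 < tau t k"
  unfolding tau_def by auto

lemma t_mono:
  fixes t :: "nat \<Rightarrow> real"
  assumes tm: "\<forall>k\<in>{1..N}. t (k-1) < t k" and "i \<le> j" "j \<le> N"
  shows "t i \<le> t j"
  using assms(2,3)
proof (induction j rule: dec_induct)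
  case (step j)
  then show ?case using tm[rule_format, of "Suc j"] by simp
qed simp

lemma tsig_minus_prev:
  "tsig t a n - t (n-1) = (1 - a/2) * tau t n"
  unfolding tsig_def tau_def by (simp add: algebra_simps)

lemma t_less_tsig:
  assumes a: "0 < a" "a < 1" and tm: "\<forall>k\<in>{1..N}. t (k-1) < t k" and "1 \<le> k" "k < n" "n \<le> N"
  shows "t k < tsig t a n"
proof -
  have "t k \<le> t (n-1)" using t_mono[OF tm] assms by simp
  moreover have "0 < (1 - a/2) * tau t n" using tau_pos[OF tm, of n] assms by simp
  ultimately show ?thesis using tsig_minus_prev[of t a n] by simp
qed

lemma acoef_eq:
  assumes "0 < a" "a < 1" "\<forall>k\<in>{1..N}. t (k-1) < t k" "1 \<le> k" "k < n" "n \<le> N"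
  shows "acoef t a n k = kern_mass a (tsig t a n) (t (k-1)) (t k) / tau t k"
  using t_less_tsig[OF assms] unfolding acoef_def kern_mass_def omega_eq_kern by simp

lemma bcoef_eq:
  "bcoef t a n k =
    2 / (tau t k * (tau t k + tau t (k+1))) * kern_moment a (tsig t a n) (t (k-1)) (t k)"
  unfolding bcoef_def kern_moment_def omega_eq_kern by simp

lemma acoef_last_eq:
  assumes "0 < a" "a < 1" "0 < tau t n"
  shows "acoef t a n n = (1 - a/2) * (((1 - a/2) * tau t n) powr (-a) / Gamma (2 - a))"
proof -
  define y where "y = (1 - a/2) * tau t n"
  have y: "0 < y" unfolding y_def using assms by simp
  have "(1 - a/2) * tau t n \<le> tau t n" using assms by (simp add: mult_le_cancel_right1)
  then have "min (t n) (tsig t a n) = tsig t a n"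
    using tsig_minus_prev[of t a n] by (simp add: tau_def)
  moreover have "integral {t (n-1)..tsig t a n} (kern a (tsig t a n))
      = y powr (1 - a) / Gamma (2 - a)"
    using kern_mass_to_apex[OF assms(2), of "t (n-1)" "tsig t a n"] y tsig_minus_prev[of t a n]
    unfolding y_def by simp
  ultimately have "acoef t a n n = y powr (1 - a) / (tau t n * Gamma (2 - a))"
    unfolding acoef_def omega_eq_kern by simp
  also have "\<dots> = (1 - a/2) * (y powr (-a) / Gamma (2 - a))"
    using y assms(3) by (simp add: powr_diff y_def) (simp add: powr_minus field_simps)
  finally show ?thesis unfolding y_def .
qed

lemma kern_prev_node_eq:
  assumes "0 < a" "a < 1"
  shows "kern a (tsig t a n) (t (n-1))
    = (1 - a) * (((1 - a/2) * tau t n) powr (-a) / Gamma (2 - a))"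
  unfolding kern_def tsig_minus_prev Gamma_two_minus[OF assms(2)] using assms by simp

text \<open>\<open>bcoef_prev t a n k\<close> is the summand \<open>b^(n)_(n-k+1) / r_k\<close> of \<open>B^(n)_(n-k)\<close>, which comes from
  the interval before \<open>t_(k-1)\<close>; it is absent for \<open>k = 1\<close>.\<close>
definition bcoef_prev :: "(nat \<Rightarrow> real) \<Rightarrow> real \<Rightarrow> nat \<Rightarrow> nat \<Rightarrow> real" where
  "bcoef_prev t a n k = (if k = 1 then 0 else bcoef t a n (k-1) / rr t k)"

lemma Bcoef_eq:
  assumes "2 \<le> n" "1 \<le> k" "k \<le> n"
  shows "Bcoef t a n k = acoef t a n k + bcoef_prev t a n k - (if k = n then 0 else bcoef t a n k)"
  unfolding Bcoef_def bcoef_prev_def using assms by auto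

lemma acoef_sub_bcoef_ge:
  assumes a: "0 < a" "a < 1" and tm: "\<forall>k\<in>{1..N}. t (k-1) < t k" and k: "1 \<le> k" "k < n" "n \<le> N"
  shows "acoef t a n k - bcoef t a n k \<ge> kern a (tsig t a n) (t (k-1))
    + kern' a (tsig t a n) (t (k-1))
      * (tau t k * (3 * tau t (k+1) + 2 * tau t k) / (6 * (tau t k + tau t (k+1))))"
proof -
  have "t (k-1) < t k" "t k < tsig t a n" "0 < tau t (k+1)"
    using tm k t_less_tsig[OF a tm k] tau_pos[OF tm, of "k+1"] by auto
  from kern_mass_sub_moment_ge[OF a this(1,2) _ this(3)]
  show ?thesis unfolding acoef_eq[OF a tm k] bcoef_eq by (simp add: tau_def)
qed

lemma bcoef_prev_Suc_add_bcoef_sub_acoef_ge: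
  assumes a: "0 < a" "a < 1" and tm: "\<forall>k\<in>{1..N}. t (k-1) < t k" and k: "1 \<le> k" "k < n" "n \<le> N"
    and H: "0 \<le> H"
  shows "bcoef_prev t a n (k+1) + bcoef t a n k - acoef t a n k \<ge>
    kern' a (tsig t a n) (t (k-1)) * (H + tau t k / 2 + (tau t k)^2 / (6 * tau t (k+1)))
    - kern a (tsig t a n) (t k) - kern' a (tsig t a n) (t k) * H"
proof -
  define q r where "q = tau t k" and "r = tau t (k+1)"
  have qr: "0 < q" "0 < r" unfolding q_def r_def using tau_pos[OF tm] k by auto
  have "t (k-1) < t k" "t k < tsig t a n" using tm k t_less_tsig[OF a tm k] by auto
  from kern_moment_sub_mass_ge[OF a this _ qr(2) H]
  moreover have "bcoef t a n k / (r / q) + bcoef t a n k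
      = 2 * kern_moment a (tsig t a n) (t (k-1)) (t k) / (q * r)"
    unfolding bcoef_eq q_def[symmetric] r_def[symmetric] using qr
    by (simp add: divide_simps) (simp add: algebra_simps)
  ultimately show ?thesis
    unfolding bcoef_prev_def acoef_eq[OF a tm k] using k
    by (simp add: rr_def q_def r_def tau_def)
qed

lemma bcoef_prev_le:
  assumes a: "0 < a" "a < 1" and tm: "\<forall>k\<in>{1..N}. t (k-1) < t k"
    and ratio: "\<forall>k\<in>{2..N}. rr t k \<ge> 4/7" and k: "1 \<le> k" "k < n" "n \<le> N"
    and H: "tau t k / 2 \<le> H"
  shows "bcoef_prev t a n k \<le> kern' a (tsig t a n) (t (k-1)) * H"
proof (cases "k = 1")
  case True
  have "0 \<le> H" using tau_pos[OF tm, of k] k H by simp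
  then show ?thesis unfolding bcoef_prev_def using True kern'_nonneg[OF a] by simp
next
  case False
  define p q where "p = tau t (k-1)" and "q = tau t k"
  have pq: "0 < p" "0 < q" unfolding p_def q_def using tau_pos[OF tm] k False by auto
  have "q / p \<ge> 4/7" using ratio k False unfolding rr_def p_def q_def by auto
  then have pq': "p \<le> 7/4 * q" using pq by (simp add: field_simps)
  have "1 \<le> k - 1" "k - 1 < n" using k False by auto
  then have ivl: "t (k-1-1) < t (k-1)" "t (k-1) < tsig t a n"
    using tm[rule_format, of "k-1"] k(3) t_less_tsig[OF a tm _ _ k(3)] by auto
  have "2 * kern_moment a (tsig t a n) (t (k-1-1)) (t (k-1)) / (q*(p+q))
      \<le> kern' a (tsig t a n) (t (k-1)) * H"
    using kern_moment_le[OF a ivl _ pq(2) pq' H[folded q_def]] by (simp add: p_def tau_def)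
  moreover have "bcoef t a n (k-1) / rr t k
      = 2 * kern_moment a (tsig t a n) (t (k-1-1)) (t (k-1)) / (q*(p+q))"
    unfolding bcoef_eq rr_def using False k pq by (simp add: p_def q_def divide_simps)
  ultimately show ?thesis unfolding bcoef_prev_def using False by simp
qed

lemma Bcoef_first_nonneg:
  assumes a: "0 < a" "a < 1" and tm: "\<forall>k\<in>{1..N}. t (k-1) < t k" and n: "2 \<le> n" "n \<le> N"
  shows "0 \<le> Bcoef t a n 1"
proof -
  have "0 < tau t 1" "0 < tau t 2" using tau_pos[OF tm] n by auto
  then have "0 \<le> kern a (tsig t a n) (t 0) + kern' a (tsig t a n) (t 0)
      * (tau t 1 * (3 * tau t 2 + 2 * tau t 1) / (6 * (tau t 1 + tau t 2)))"
    using kern_nonneg[OF a(2)] kern'_nonneg[OF a] by simp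
  also have "\<dots> \<le> acoef t a n 1 - bcoef t a n 1"
    using acoef_sub_bcoef_ge[OF a tm, of 1 n] n by (simp add: numeral_2_eq_2)
  finally show ?thesis using Bcoef_eq[OF n(1), of 1] n by (simp add: bcoef_prev_def)
qed

lemma Bcoef_mono:
  assumes a: "0 < a" "a < 1" and tm: "\<forall>k\<in>{1..N}. t (k-1) < t k"
    and ratio: "\<forall>k\<in>{2..N}. rr t k \<ge> 4/7" and k: "1 \<le> k" "k + 2 \<le> n" and n: "n \<le> N"
  shows "Bcoef t a n k \<le> Bcoef t a n (k+1)"
proof -
  define T where "T = tsig t a n"
  define H where
    "H = tau t (k+1) * (3 * tau t (k+2) + 2 * tau t (k+1)) / (6 * (tau t (k+1) + tau t (k+2)))"
  define H' where "H' = H + tau t k / 2 + (tau t k)^2 / (6 * tau t (k+1))"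
  have "0 < tau t k" "0 < tau t (k+1)" "0 < tau t (k+2)" using tau_pos[OF tm] k n by auto
  then have H: "0 \<le> H" "tau t k / 2 \<le> H'" unfolding H_def H'_def by auto
  have "acoef t a n (k+1) - bcoef t a n (k+1) \<ge> kern a T (t k) + kern' a T (t k) * H"
    using acoef_sub_bcoef_ge[OF a tm, of "k+1" n] k n
    unfolding T_def H_def by (simp add: add.commute)
  moreover have "bcoef_prev t a n (k+1) + bcoef t a n k - acoef t a n k \<ge>
      kern' a T (t (k-1)) * H' - kern a T (t k) - kern' a T (t k) * H"
    using bcoef_prev_Suc_add_bcoef_sub_acoef_ge[OF a tm k(1) _ n H(1)] k
    unfolding T_def H'_def by simp
  moreover have "bcoef_prev t a n k \<le> kern' a T (t (k-1)) * H'"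
    using bcoef_prev_le[OF a tm ratio k(1) _ n H(2)] k unfolding T_def by simp
  ultimately show ?thesis using Bcoef_eq[of n k t a] Bcoef_eq[of n "k+1" t a] k by simp
qed

lemma Bcoef_last_sub_ge:
  assumes a: "0 < a" "a < 1" and tm: "\<forall>k\<in>{1..N}. t (k-1) < t k"
    and ratio: "\<forall>k\<in>{2..N}. rr t k \<ge> 4/7" and n: "2 \<le> n" "n \<le> N"
  shows "Bcoef t a n n - Bcoef t a n (n-1) \<ge> acoef t a n n - kern a (tsig t a n) (t (n-1))"
proof -
  define T where "T = tsig t a n"
  define k where "k = n - 1"
  have k: "1 \<le> k" "k < n" "k + 1 = n" using n unfolding k_def by auto
  define H where "H = tau t k / 2 + (tau t k)^2 / (6 * tau t n)"
  have "0 < tau t k" "0 < tau t n" using tau_pos[OF tm] k n by auto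
  then have H: "tau t k / 2 \<le> H" unfolding H_def by simp
  have "bcoef_prev t a n n + bcoef t a n k - acoef t a n k \<ge>
      kern' a T (t (k-1)) * H - kern a T (t k)"
    using bcoef_prev_Suc_add_bcoef_sub_acoef_ge[OF a tm k(1,2) n(2) order_refl] k
    unfolding T_def H_def by simp
  moreover have "bcoef_prev t a n k \<le> kern' a T (t (k-1)) * H"
    using bcoef_prev_le[OF a tm ratio k(1,2) n(2) H] unfolding T_def .
  ultimately show ?thesis
    using Bcoef_eq[OF n(1), of n t a] Bcoef_eq[OF n(1), of k t a] k
    unfolding T_def k_def[symmetric] by simp
qed

lemma small_step_powr_ge:
  fixes a m C \<tau> :: real
  assumes a: "0 < a" "a < 1" and pos: "0 < \<tau>" "0 < m * C"
    and step: "\<tau> \<le> (4 / (11 * (1 - a/2) * m * C * Gamma (2 - a))) powr (1/a)"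
  shows "m * C \<le> ((1 - a/2) * \<tau>) powr (-a) / Gamma (2 - a)"
proof -
  define Q where "Q = 4 / (11 * (1 - a/2) * m * C * Gamma (2 - a))"
  have G: "0 < Gamma (2 - a)" using Gamma_two_minus_pos a by simp
  then have "0 < 11 * (1 - a/2) * (m * C) * Gamma (2 - a)" using a pos by simp
  then have Q: "0 < Q" unfolding Q_def by (simp add: mult.assoc)
  have "\<tau> powr a \<le> (Q powr (1/a)) powr a"
    using step pos a unfolding Q_def[symmetric] by (intro powr_mono2) auto
  also have "\<dots> = Q" using a Q by (simp add: powr_powr)
  finally have "1 / Q \<le> 1 / \<tau> powr a" using pos Q by (intro divide_left_mono) auto
  moreover have "m * C * Gamma (2 - a) \<le> 1 / Q"
  proof -
    have "1 * (m * C * Gamma (2 - a)) \<le> 11 * (1 - a/2) / 4 * (m * C * Gamma (2 - a))"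
      using a pos G by (intro mult_right_mono) auto
    then show ?thesis unfolding Q_def by simp
  qed
  moreover have "1 / \<tau> powr a = \<tau> powr (-a)" by (simp add: powr_minus divide_inverse)
  moreover have "\<tau> powr (-a) \<le> ((1 - a/2) * \<tau>) powr (-a)"
    using a pos by (intro powr_mono2') (auto simp: mult_le_cancel_right1)
  ultimately show ?thesis using G by (simp add: field_simps)
qed

lemma Bcoef_gap:
  assumes a: "0 < a" "a < 1" and tm: "\<forall>k\<in>{1..N}. t (k-1) < t k"
    and ratio: "\<forall>k\<in>{2..N}. rr t k \<ge> 4/7" and n: "1 \<le> n" "n \<le> N" and mC: "0 < m * C"
    and step: "tau t n \<le> (4 / (11 * (1 - a/2) * m * C * Gamma (2 - a))) powr (1/a)"
  shows "Bcoef t a n n - (if n = 1 then 0 else Bcoef t a n (n-1)) \<ge> m * (a/2) * C"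
proof -
  define Y where "Y = ((1 - a/2) * tau t n) powr (-a) / Gamma (2 - a)"
  have \<tau>: "0 < tau t n" using tau_pos[OF tm] n by simp
  have "m * C \<le> Y" unfolding Y_def using small_step_powr_ge[OF a \<tau> mC step] .
  then have gap: "m * (a/2) * C \<le> (a/2) * Y" using a by (simp add: algebra_simps)
  have an: "acoef t a n n = (1 - a/2) * Y" unfolding Y_def using acoef_last_eq[OF a \<tau>] .
  show ?thesis
  proof (cases "n = 1")
    case True
    have "(a/2) * Y \<le> (1 - a/2) * Y" using \<open>m * C \<le> Y\<close> mC a by (intro mult_right_mono) auto
    then show ?thesis using True gap an unfolding Bcoef_def by simp
  next
    case False
    then show ?thesis
      using Bcoef_last_sub_ge[OF a tm ratio _ n(2)] kern_prev_node_eq[OF a, of t n] gap an n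
      unfolding Y_def[symmetric] by (simp add: algebra_simps)
  qed
qed

section \<open>The nonlinearity\<close>

lemma nonlinearity_wells:
  assumes
      "(F = dwF \<and> f = dwf \<and> \<beta> = 1) \<or>
       (\<exists>\<theta> \<theta>c. 0 < \<theta> \<and> \<theta> < \<theta>c \<and> F = fhF \<theta> \<theta>c \<and> f = fhf \<theta> \<theta>c
          \<and> 0 < \<beta> \<and> \<beta> < 1 \<and> f \<beta> = 0)"
  shows "0 < \<beta> \<and> f (-\<beta>) = 0 \<and> f \<beta> = 0 \<and> (\<forall>x\<in>{-\<beta>..\<beta>}. f differentiable (at x))"
  using assms
proof
  assume "F = dwF \<and> f = dwf \<and> \<beta> = 1"
  moreover have "dwf differentiable (at x)" for x
    unfolding dwf_def by (intro derivative_intros)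
  ultimately show ?thesis by (simp add: dwf_def)
next
  assume "\<exists>\<theta> \<theta>c. 0 < \<theta> \<and> \<theta> < \<theta>c \<and> F = fhF \<theta> \<theta>c \<and> f = fhf \<theta> \<theta>c \<and> 0 < \<beta> \<and> \<beta> < 1 \<and> f \<beta> = 0"
  then obtain \<theta> \<theta>c where f: "f = fhf \<theta> \<theta>c" and \<beta>: "0 < \<beta>" "\<beta> < 1" "f \<beta> = 0" by blast
  have "fhf \<theta> \<theta>c (-\<beta>) = - fhf \<theta> \<theta>c \<beta>"
    unfolding fhf_def using \<beta> by (simp add: ln_div algebra_simps)
  moreover have "fhf \<theta> \<theta>c differentiable (at x)" if "x \<in> {-\<beta>..\<beta>}" for x
    unfolding fhf_def real_differentiable_def using that \<beta>
    by (intro exI derivative_eq_intros refl) auto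
  ultimately show ?thesis using f \<beta> by simp
qed

lemma abs_add_linear_le:
  fixes f :: "real \<Rightarrow> real"
  assumes wells: "f (-\<beta>) = 0" "f \<beta> = 0"
    and diff: "\<forall>x\<in>{-\<beta>..\<beta>}. f differentiable (at x)"
    and deriv: "\<forall>x\<in>{-\<beta>..\<beta>}. \<bar>deriv f x\<bar> \<le> \<kappa>"
    and z: "\<bar>z\<bar> \<le> \<beta>"
  shows "\<bar>f z + \<kappa> * z\<bar> \<le> \<kappa> * \<beta>"
proof -
  have mono: "f x + \<kappa> * x \<le> f y + \<kappa> * y" if "-\<beta> \<le> x" "x \<le> y" "y \<le> \<beta>" for x y
  proof (rule DERIV_nonneg_imp_nondecreasing[OF \<open>x \<le> y\<close>])
    fix s assume "x \<le> s" "s \<le> y"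
    then have s: "s \<in> {-\<beta>..\<beta>}" using that by simp
    then have "(f has_real_derivative deriv f s) (at s)"
      using diff DERIV_deriv_iff_real_differentiable by blast
    then have "((\<lambda>x. f x + \<kappa> * x) has_real_derivative deriv f s + \<kappa>) (at s)"
      by (auto intro!: derivative_eq_intros)
    moreover have "0 \<le> deriv f s + \<kappa>" using deriv[rule_format, OF s] by (simp add: abs_le_iff)
    ultimately show "\<exists>D. ((\<lambda>x. f x + \<kappa> * x) has_real_derivative D) (at s) \<and> 0 \<le> D" by blast
  qed
  show ?thesis using mono[of "-\<beta>" z] mono[of z \<beta>] wells z by (simp add: abs_le_iff)
qed

section \<open>Grid functions\<close>

lemma gridspace_shift:
  assumes v: "v \<in> gridspace M"
  shows "v (i + int M * c) j = v i j \<and> v i (j + int M * c) = v i j"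
proof -
  have per: "v (i + int M) j = v i j" "v i (j + int M) = v i j" for i j
    using v unfolding gridspace_def by auto
  have "\<forall>i j. v (i + int M * c) j = v i j \<and> v i (j + int M * c) = v i j"
  proof (induction c rule: int_induct[where k = 0])
    case (step1 c)
    have "v (i + int M * (c + 1)) j = v (i + int M * c) j"
      "v i (j + int M * (c + 1)) = v i (j + int M * c)" for i j
      using per(1)[of "i + int M * c" j] per(2)[of i "j + int M * c"]
      by (simp_all add: algebra_simps)
    then show ?case using step1 by simp
  next
    case (step2 c)
    have "v (i + int M * (c - 1)) j = v (i + int M * c) j"
      "v i (j + int M * (c - 1)) = v i (j + int M * c)" for i j
      using per(1)[of "i + int M * (c - 1)" j] per(2)[of i "j + int M * (c - 1)"]
      by (simp_all add: algebra_simps)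
    then show ?case using step2 by simp
  qed simp
  then show ?thesis by blast
qed

lemma gridspace_reduce:
  assumes "v \<in> gridspace M" "1 \<le> M"
  obtains i' j' where "i' \<in> {1..int M}" "j' \<in> {1..int M}" "v i j = v i' j'"
proof
  let ?r = "\<lambda>i. (i - 1) mod int M + 1"
  show "?r i \<in> {1..int M}" "?r j \<in> {1..int M}" using assms(2) by (simp_all add: add1_zle_eq)
  have "v i j = v (?r i + int M * ((i - 1) div int M)) (?r j + int M * ((j - 1) div int M))"
    by (simp add: algebra_simps)
  also have "\<dots> = v (?r i) (?r j)" by (simp only: gridspace_shift[OF assms(1)])
  finally show "v i j = v (?r i) (?r j)" .
qed

lemma gsup_le_iff:
  assumes "1 \<le> M"
  shows "gsup M v \<le> b \<longleftrightarrow> (\<forall>i\<in>{1..int M}. \<forall>j\<in>{1..int M}. \<bar>v i j\<bar> \<le> b)"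
  unfolding gsup_def using assms by (auto simp: Max_le_iff)

lemma abs_le_of_gsup_le:
  assumes "v \<in> gridspace M" "1 \<le> M" "gsup M v \<le> b"
  shows "\<bar>v i j\<bar> \<le> b"
proof -
  obtain i' j' where "i' \<in> {1..int M}" "j' \<in> {1..int M}" "v i j = v i' j'"
    using gridspace_reduce[OF assms(1,2)] .
  then show ?thesis using assms(3) unfolding gsup_le_iff[OF assms(2)] by simp
qed

lemma gridspace_has_max:
  assumes v: "v \<in> gridspace M" and M: "1 \<le> M"
  obtains i0 j0 where "\<And>i j. v i j \<le> v i0 j0"
proof -
  define V where "V = (\<lambda>(i, j). v i j) ` ({1..int M} \<times> {1..int M})"
  have "finite V" "V \<noteq> {}" unfolding V_def using M by auto
  then have "Max V \<in> V" by (rule Max_in)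
  then obtain i0 j0 where "Max V = v i0 j0" unfolding V_def by auto
  moreover have "v i j \<le> Max V" for i j
  proof -
    obtain i' j' where "i' \<in> {1..int M}" "j' \<in> {1..int M}" "v i j = v i' j'"
      using gridspace_reduce[OF v M] .
    then show ?thesis using \<open>finite V\<close> unfolding V_def by (auto intro!: Max_ge)
  qed
  ultimately show ?thesis using that by metis
qed

lemma glap_convex_comb:
  "glap h (\<lambda>a b. (1-s) * u a b + s * w a b) i j = (1-s) * glap h u i j + s * glap h w i j"
  unfolding glap_def by (simp add: algebra_simps add_divide_distrib diff_divide_distrib)

lemma glap_uminus: "glap h (\<lambda>a b. - u a b) i j = - glap h u i j"
  unfolding glap_def by (simp add: algebra_simps add_divide_distrib diff_divide_distrib)

lemma glap_le:
  assumes "0 < h" "\<And>i j. u i j \<le> b"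
  shows "glap h u i j \<le> 4 * (b - u i j) / h^2"
proof -
  have "u (i+1) j + u (i-1) j + u i (j+1) + u i (j-1) - 4 * u i j \<le> 4 * (b - u i j)"
    using assms(2)[of "i+1" j] assms(2)[of "i-1" j] assms(2)[of i "j+1"] assms(2)[of i "j-1"]
    by simp
  then show ?thesis unfolding glap_def using assms(1) by (simp add: divide_right_mono)
qed

section \<open>A discrete maximum principle\<close>

text \<open>Summation by parts: with nonnegative nondecreasing weights, the history terms are bounded
  below as if every earlier value sat at the bound \<open>\<beta>\<close>.\<close>
lemma sum_weighted_increments_ge:
  fixes B v :: "nat \<Rightarrow> real"
  assumes m: "1 \<le> m" and B1: "0 \<le> B 1" and mono: "\<And>k. 1 \<le> k \<Longrightarrow> k < m \<Longrightarrow> B k \<le> B (k+1)"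
    and v: "\<And>k. k < m \<Longrightarrow> v k \<le> \<beta>"
  shows "B m * (v m - \<beta>) \<le> (\<Sum>k=1..m. B k * (v k - v (k-1)))"
  using m
proof (induction m rule: dec_induct)
  case base
  show ?case using B1 v[of 0] m by (simp add: mult_left_mono)
next
  case (step k)
  have "0 \<le> (B (Suc k) - B k) * (\<beta> - v k)" using mono[of k] v[of k] step by simp
  then show ?case using step by (simp add: algebra_simps)
qed

lemma scheme_node_le:
  fixes Bn Bp S x x' L L' W g z m e h s \<kappa> K \<beta> :: real
  assumes eq: "Bn * (x - x') + S = m * (e^2 * ((1-s)*L + s*L') + W*g - \<kappa>*W*(((1-s)*x + s*x') - z))"
    and S: "Bp * (x' - \<beta>) \<le> S" and x': "x' \<le> \<beta>" and L: "L \<le> 0" and L': "L' \<le> 4*(\<beta> - x')/h^2"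
    and W: "0 \<le> W" "W \<le> K" and g: "g + \<kappa>*z \<le> \<kappa>*\<beta>" and \<kappa>: "0 \<le> \<kappa>" and m: "0 < m"
    and s: "0 \<le> s" "s \<le> 1" and Bn: "0 < Bn" and gap: "m * s * (4*e^2/h^2 + \<kappa>*K) \<le> Bn - Bp"
  shows "x \<le> \<beta>"
proof (rule ccontr)
  assume "\<not> x \<le> \<beta>"
  define d d' where "d = x - \<beta>" and "d' = \<beta> - x'"
  have d: "0 < d" "0 \<le> d'" unfolding d_def d'_def using \<open>\<not> x \<le> \<beta>\<close> x' by auto
  have "e^2 * ((1-s)*L) \<le> 0" using L s by (simp add: mult_nonneg_nonpos)
  moreover have "e^2 * (s*L') \<le> e^2 * (s*(4*d'/h^2))"
    using L' s unfolding d'_def by (intro mult_left_mono) auto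
  moreover have "W*(g + \<kappa>*z) \<le> W*(\<kappa>*\<beta>)" using g W by (simp add: mult_left_mono)
  moreover have "0 \<le> \<kappa>*W*((1-s)*d)" using \<kappa> W s d by simp
  moreover have "\<kappa>*W*(s*d') \<le> \<kappa>*K*(s*d')"
    using \<kappa> W s d by (simp add: mult_right_mono mult_left_mono)
  moreover have "e^2 * ((1-s)*L + s*L') + W*g - \<kappa>*W*(((1-s)*x + s*x') - z)
      = e^2 * ((1-s)*L) + e^2*(s*L') + W*(g + \<kappa>*z) - W*(\<kappa>*\<beta>) - \<kappa>*W*((1-s)*d) + \<kappa>*W*(s*d')"
    unfolding d_def d'_def by (simp add: algebra_simps)
  ultimately have rhs: "e^2 * ((1-s)*L + s*L') + W*g - \<kappa>*W*(((1-s)*x + s*x') - z)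
      \<le> s*(4*e^2/h^2 + \<kappa>*K)*d'"
    by (simp add: algebra_simps)
  have "Bn * d + (Bn - Bp) * d' = Bn * (x - x') + Bp * (x' - \<beta>)"
    unfolding d_def d'_def by (simp add: algebra_simps)
  also have "\<dots> \<le> Bn * (x - x') + S" using S by simp
  also have "\<dots> \<le> m * (s*(4*e^2/h^2 + \<kappa>*K)*d')"
    unfolding eq using rhs m by (simp add: mult_left_mono)
  finally have "Bn * d + (Bn - Bp) * d' \<le> m * (s*(4*e^2/h^2 + \<kappa>*K)*d')" .
  moreover have "m * s * (4*e^2/h^2 + \<kappa>*K) * d' \<le> (Bn - Bp) * d'"
    using gap d by (simp add: mult_right_mono)
  ultimately have "Bn * d \<le> 0" by (simp add: algebra_simps)
  then show False using Bn d by (simp add: mult_le_0_iff)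
qed

text \<open>Evaluate the scheme at a node where \<open>u\<^sup>n\<close> is maximal.\<close>
lemma scheme_le_bound:
  fixes u :: "nat \<Rightarrow> grid" and B :: "nat \<Rightarrow> real" and f :: "real \<Rightarrow> real" and z :: grid
  assumes eq: "\<And>i j. (\<Sum>k=1..n. B k * (u k i j - u (k-1) i j)) =
        m * (e^2 * glap h (\<lambda>a b. (1-s) * u n a b + s * u (n-1) a b) i j + W * f (z i j)
             - \<kappa> * W * (((1-s) * u n i j + s * u (n-1) i j) - z i j))"
    and f: "\<And>i j. f (z i j) + \<kappa> * z i j \<le> \<kappa> * \<beta>"
    and prev: "\<And>k i j. k < n \<Longrightarrow> u k i j \<le> \<beta>"
    and grid: "u n \<in> gridspace M" "1 \<le> M" and n: "1 \<le> n"
    and first: "2 \<le> n \<Longrightarrow> 0 \<le> B 1"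
    and mono: "\<And>k. 1 \<le> k \<Longrightarrow> k + 2 \<le> n \<Longrightarrow> B k \<le> B (k+1)"
    and gap: "m * s * (4*e^2/h^2 + \<kappa>*K) \<le> B n - (if n = 1 then 0 else B (n-1))"
    and W: "0 \<le> W" "W \<le> K" and \<kappa>: "0 \<le> \<kappa>" and m: "0 < m" and s: "0 < s" "s < 1"
    and h: "0 < h" and e: "e \<noteq> 0"
  shows "u n i j \<le> \<beta>"
proof -
  obtain i0 j0 where max: "\<And>i j. u n i j \<le> u n i0 j0" using gridspace_has_max[OF grid] by blast
  define Bp where "Bp = (if n = 1 then 0 else B (n-1))"
  define S where "S = (\<Sum>k=1..n-1. B k * (u k i0 j0 - u (k-1) i0 j0))"
  have "0 \<le> Bp"
  proof (cases "n = 1")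
    case False
    have "0 \<le> B k" if "1 \<le> k" "k \<le> n - 1" for k
      using that by (induction k rule: dec_induct)
        (use first mono False n in \<open>auto intro: order_trans\<close>)
    then show ?thesis unfolding Bp_def using False n by simp
  qed (simp add: Bp_def)
  moreover have "0 < m * s * (4*e^2/h^2 + \<kappa>*K)" using m s h e \<kappa> W by (simp add: add_pos_nonneg)
  ultimately have Bn: "0 < B n" using gap unfolding Bp_def[symmetric] by linarith
  have S: "Bp * (u (n-1) i0 j0 - \<beta>) \<le> S"
  proof (cases "n = 1")
    case False
    then show ?thesis unfolding S_def Bp_def
      using sum_weighted_increments_ge[of "n-1" B "\<lambda>k. u k i0 j0" \<beta>] first mono prev n by auto
  qed (simp add: S_def Bp_def)
  have "(\<Sum>k=1..n. B k * (u k i0 j0 - u (k-1) i0 j0)) = B n * (u n i0 j0 - u (n-1) i0 j0) + S"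
    unfolding S_def using n by (cases n) auto
  then have eq0: "B n * (u n i0 j0 - u (n-1) i0 j0) + S =
      m * (e^2 * ((1-s) * glap h (u n) i0 j0 + s * glap h (u (n-1)) i0 j0) + W * f (z i0 j0)
           - \<kappa> * W * (((1-s) * u n i0 j0 + s * u (n-1) i0 j0) - z i0 j0))"
    using eq[of i0 j0] unfolding glap_convex_comb by simp
  have L: "glap h (u n) i0 j0 \<le> 0"
    using glap_le[where u = "u n", OF h max] by (metis diff_self mult_zero_right div_0)
  have prev': "u (n-1) i j \<le> \<beta>" for i j using prev n by simp
  then have L': "glap h (u (n-1)) i0 j0 \<le> 4 * (\<beta> - u (n-1) i0 j0) / h^2" by (rule glap_le[OF h])
  have "u n i0 j0 \<le> \<beta>"
    using scheme_node_le[OF eq0 S prev' L L' W f \<kappa> m _ _ Bn] s gap unfolding Bp_def by simp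
  then show ?thesis using max order_trans by blast
qed

lemma scheme_abs_bound:
  fixes u :: "nat \<Rightarrow> grid" and B :: "nat \<Rightarrow> real" and f :: "real \<Rightarrow> real" and z :: grid
  assumes eq: "\<And>i j. (\<Sum>k=1..n. B k * (u k i j - u (k-1) i j)) =
        m * (e^2 * glap h (\<lambda>a b. (1-s) * u n a b + s * u (n-1) a b) i j + W * f (z i j)
             - \<kappa> * W * (((1-s) * u n i j + s * u (n-1) i j) - z i j))"
    and f: "\<And>x. \<bar>x\<bar> \<le> \<beta> \<Longrightarrow> \<bar>f x + \<kappa> * x\<bar> \<le> \<kappa> * \<beta>" and z: "\<And>i j. \<bar>z i j\<bar> \<le> \<beta>"
    and prev: "\<And>k i j. k < n \<Longrightarrow> \<bar>u k i j\<bar> \<le> \<beta>"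
    and grid: "u n \<in> gridspace M" "1 \<le> M" and n: "1 \<le> n"
    and first: "2 \<le> n \<Longrightarrow> 0 \<le> B 1"
    and mono: "\<And>k. 1 \<le> k \<Longrightarrow> k + 2 \<le> n \<Longrightarrow> B k \<le> B (k+1)"
    and gap: "m * s * (4*e^2/h^2 + \<kappa>*K) \<le> B n - (if n = 1 then 0 else B (n-1))"
    and W: "0 \<le> W" "W \<le> K" and \<kappa>: "0 \<le> \<kappa>" and m: "0 < m" and s: "0 < s" "s < 1"
    and h: "0 < h" and e: "e \<noteq> 0"
  shows "\<bar>u n i j\<bar> \<le> \<beta>"
proof -
  have "u n i j \<le> \<beta>"
    using scheme_le_bound[OF eq _ _ grid n first mono gap W \<kappa> m s h e] f[OF z] prev
    by (simp add: abs_le_iff)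
  moreover have "- u n i j \<le> \<beta>"
  proof (rule scheme_le_bound[where u = "\<lambda>k i j. - u k i j" and f = "\<lambda>x. - f (- x)"
        and z = "\<lambda>i j. - z i j", OF _ _ _ _ grid(2) n first mono gap W \<kappa> m s h e])
    show "(\<Sum>k=1..n. B k * (- u k i j - - u (k-1) i j)) =
        m * (e^2 * glap h (\<lambda>a b. (1-s) * - u n a b + s * - u (n-1) a b) i j + W * - f (- (- z i j))
             - \<kappa> * W * (((1-s) * - u n i j + s * - u (n-1) i j) - - z i j))" for i j
    proof -
      have "(\<Sum>k=1..n. B k * (- u k i j - - u (k-1) i j))
          = - (\<Sum>k=1..n. B k * (u k i j - u (k-1) i j))"
        unfolding sum_negf[symmetric] by (rule sum.cong) (simp_all add: algebra_simps)
      then show ?thesis unfolding eq glap_convex_comb glap_uminus by (simp add: algebra_simps)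
    qed
    show "(\<lambda>i j. - u n i j) \<in> gridspace M" using grid(1) unfolding gridspace_def by simp
  qed (use f[OF z] prev in \<open>auto simp: abs_le_iff\<close>)
  ultimately show ?thesis by (simp add: abs_le_iff)
qed

lemma Dcaputo_step_abs_bound:
  fixes u :: "nat \<Rightarrow> grid" and f :: "real \<Rightarrow> real" and z :: grid
  assumes a: "0 < a" "a < 1" and tm: "\<forall>k\<in>{1..N}. t (k-1) < t k"
    and ratio: "\<forall>k\<in>{2..N}. rr t k \<ge> 4/7" and n: "1 \<le> n" "n \<le> N"
    and step: "tau t n \<le>
      (4 / (11 * (1 - a/2) * m * (4 * e^2 / h^2 + \<kappa> * K) * Gamma (2 - a))) powr (1/a)"
    and eq: "\<And>i j. Dcaputo t a u n i j =
        m * (e^2 * glap h (\<lambda>x y. (1 - a/2) * u n x y + (a/2) * u (n-1) x y) i j + W * f (z i j)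
             - \<kappa> * W * (((1 - a/2) * u n i j + (a/2) * u (n-1) i j) - z i j))"
    and f: "\<And>x. \<bar>x\<bar> \<le> \<beta> \<Longrightarrow> \<bar>f x + \<kappa> * x\<bar> \<le> \<kappa> * \<beta>" and z: "\<And>i j. \<bar>z i j\<bar> \<le> \<beta>"
    and prev: "\<And>k i j. k < n \<Longrightarrow> \<bar>u k i j\<bar> \<le> \<beta>"
    and grid: "u n \<in> gridspace M" "1 \<le> M"
    and W: "0 \<le> W" "W \<le> K" and \<kappa>: "0 \<le> \<kappa>" and m: "0 < m" and h: "0 < h" and e: "e \<noteq> 0"
  shows "\<bar>u n i j\<bar> \<le> \<beta>"
proof -
  have "0 < m * (4 * e^2 / h^2 + \<kappa> * K)" using m h e \<kappa> W by (simp add: add_pos_nonneg)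
  from Bcoef_gap[OF a tm ratio n this step]
  have gap: "m * (a/2) * (4 * e^2 / h^2 + \<kappa> * K)
      \<le> Bcoef t a n n - (if n = 1 then 0 else Bcoef t a n (n-1))"
    by simp
  show ?thesis
    using scheme_abs_bound[OF eq[unfolded Dcaputo_def] f z prev grid n(1)
        Bcoef_first_nonneg[OF a tm _ n(2)] Bcoef_mono[OF a tm ratio _ _ n(2)] gap W \<kappa> m _ _ h e] a
    by simp
qed

lemma abs_clip_le: "0 \<le> \<beta> \<Longrightarrow> \<bar>clip \<beta> x\<bar> \<le> \<beta>"
  unfolding clip_def by auto

lemma abs_convex_comb_le:
  fixes x y s \<beta> :: real
  assumes "\<bar>x\<bar> \<le> \<beta>" "\<bar>y\<bar> \<le> \<beta>" "0 \<le> s" "s \<le> 1"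
  shows "\<bar>(1 - s) * x + s * y\<bar> \<le> \<beta>"
  using assms convex_bound_le[of x \<beta> y "1 - s" s] convex_bound_le[of "-x" \<beta> "-y" "1 - s" s]
  by (auto simp: abs_le_iff)

theorem mainTheorem10:
  fixes L m \<epsilon> \<alpha> \<kappa> \<beta> K1 K2 T R0 :: real
    and M N :: nat
    and F f V :: "real \<Rightarrow> real"
    and t :: "nat \<Rightarrow> real"
    and \<phi> \<phi>hat :: "nat \<Rightarrow> grid"
    and R :: "nat \<Rightarrow> real"
  assumes L: "L > 0" and m: "m > 0" and eps: "\<epsilon> > 0"
    and alpha: "0 < \<alpha>" "\<alpha> < 1"
    and M: "M \<ge> 1"
    and nonlin:
      "(F = dwF \<and> f = dwf \<and> \<beta> = 1) \<or>
       (\<exists>\<theta> \<theta>c. 0 < \<theta> \<and> \<theta> < \<theta>c \<and> F = fhF \<theta> \<theta>c \<and> f = fhf \<theta> \<theta>c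
          \<and> 0 < \<beta> \<and> \<beta> < 1 \<and> f \<beta> = 0)"
    and V_diff: "\<forall>x. V differentiable (at x)"
    and V_C1: "continuous_on UNIV (deriv V)"
    and V_W2inf: "\<exists>Lip. \<forall>x y. \<bar>deriv V x - deriv V y\<bar> \<le> Lip * \<bar>x - y\<bar>"
    and V1: "V 1 = 1" and dV1: "deriv V 1 = 0"
    and dVbound: "\<forall>x. \<bar>deriv V x\<bar> \<le> K1"
    and K2: "K2 > 0" and Vbound: "\<forall>x. 0 \<le> V x \<and> V x \<le> K2"
    and Vmono: "\<forall>z1 z2. \<bar>z1 - 1\<bar> \<le> \<bar>z2 - 1\<bar> \<longrightarrow> \<bar>V z1 - 1\<bar> \<le> \<bar>V z2 - 1\<bar>"
    and t0: "t 0 = 0" and tN: "t N = T"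
    and tmono: "\<forall>k\<in>{1..N}. t (k-1) < t k"
    and kappa0: "\<kappa> \<ge> 0"
    and ratio: "\<forall>k\<in>{2..N}. rr t k \<ge> 4/7"
    and kappa: "\<forall>x\<in>{-\<beta>..\<beta>}. \<bar>deriv f x\<bar> \<le> \<kappa>"
    and phi0: "gsup M (\<phi> 0) \<le> \<beta>"
    and tau1: "N \<ge> 1 \<longrightarrow> tau t 1 \<le> min
        ((4 / (11 * (\<alpha>/2) * m * (\<kappa> + 4 * \<epsilon>^2 / (L / real M)^2) * Gamma (2 - \<alpha>))) powr (1/\<alpha>))
        ((4 / (11 * \<kappa> * (1 - \<alpha>/2) * m * Gamma (2 - \<alpha>))) powr (1/\<alpha>))"
    and taun: "\<forall>n\<in>{1..N}. tau t n \<le>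
        (4 / (11 * (1 - \<alpha>/2) * m * (4 * \<epsilon>^2 / (L / real M)^2 + \<kappa> * K2) * Gamma (2 - \<alpha>))) powr (1/\<alpha>)"
    and R_0: "R 0 = R0"
    and grid_phi: "\<forall>n\<le>N. \<phi> n \<in> gridspace M"
    and grid_phihat: "\<forall>n\<in>{1..N}. \<phi>hat n \<in> gridspace M"
    and step1: "N \<ge> 1 \<longrightarrow> gsup M (\<phi>hat 1) \<le> \<beta> \<and>
        (\<forall>i j. Bcoef t \<alpha> 1 1 * (\<phi>hat 1 i j - \<phi> 0 i j) =
           m * (\<epsilon>^2 * glap (L / real M) (\<lambda>a b. (1 - \<alpha>/2) * \<phi>hat 1 a b + (\<alpha>/2) * \<phi> 0 a b) i j
                + f ((1 - \<alpha>/2) * \<phi>hat 1 i j + (\<alpha>/2) * \<phi> 0 i j)))"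
    and predict: "\<forall>n\<in>{2..N}. \<forall>i j.
        \<phi>hat n i j = clip \<beta> ((1 + rr t n) * \<phi> (n-1) i j - rr t n * \<phi> (n-2) i j)"
    and scheme_phi: "\<forall>n\<in>{1..N}.
        (let hs = (\<lambda>a b. (1 - \<alpha>/2) * \<phi>hat n a b + (\<alpha>/2) * \<phi> (n-1) a b);
             ps = (\<lambda>a b. (1 - \<alpha>/2) * \<phi> n a b + (\<alpha>/2) * \<phi> (n-1) a b);
             Vn = V (gh F (L / real M) M hs (R (n-1)))
         in \<forall>i j. Dcaputo t \<alpha> \<phi> n i j =
              m * (\<epsilon>^2 * glap (L / real M) ps i j + Vn * f (hs i j)
                   - \<kappa> * Vn * (ps i j - hs i j)))"
    and scheme_R: "\<forall>n\<in>{1..N}.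
        (let hs = (\<lambda>a b. (1 - \<alpha>/2) * \<phi>hat n a b + (\<alpha>/2) * \<phi> (n-1) a b);
             ps = (\<lambda>a b. (1 - \<alpha>/2) * \<phi> n a b + (\<alpha>/2) * \<phi> (n-1) a b);
             Vn = V (gh F (L / real M) M hs (R (n-1)))
         in (R n - R (n-1)) / tau t n =
              Vn * gip (L / real M) M (\<lambda>a b. - f (hs a b) + \<kappa> * (ps a b - hs a b))
                     (\<lambda>a b. (\<phi> n a b - \<phi> (n-1) a b) / tau t n))"
  shows "\<forall>n\<in>{1..N}. gsup M (\<phi> n) \<le> \<beta>"
  \<comment> \<open>Only the bound (A2) on \<open>V\<close> is needed, and the restriction on \<open>\<tau>\<^sub>1\<close> only serves to produce
    the bounded first predictor \<open>\<phi>hat 1\<close>, which \<open>step1\<close> provides directly.\<close>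
proof -
  have h: "0 < L / real M" using L M by simp
  have wells: "0 < \<beta>" "f (-\<beta>) = 0" "f \<beta> = 0" "\<forall>x\<in>{-\<beta>..\<beta>}. f differentiable (at x)"
    using nonlinearity_wells[OF nonlin] by auto
  note f_bound = abs_add_linear_le[OF wells(2-4) kappa]
  have "\<bar>\<phi> n i j\<bar> \<le> \<beta>" if "n \<le> N" for n i j
    using that
  proof (induction n arbitrary: i j rule: less_induct)
    case (less n)
    show ?case
    proof (cases "n = 0")
      case True
      then show ?thesis using abs_le_of_gsup_le[OF _ M phi0] grid_phi by simp
    next
      case False
      then have n: "1 \<le> n" "n \<le> N" using less.prems by auto
      have prev: "\<And>k i j. k < n \<Longrightarrow> \<bar>\<phi> k i j\<bar> \<le> \<beta>" using less.IH n by simp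
      have hat: "\<bar>\<phi>hat n i j\<bar> \<le> \<beta>" for i j
      proof (cases "n = 1")
        case True
        then have "\<phi>hat 1 \<in> gridspace M" "gsup M (\<phi>hat 1) \<le> \<beta>" using grid_phihat step1 n by auto
        from abs_le_of_gsup_le[OF this(1) M this(2)] show ?thesis using True by simp
      qed (use predict n abs_clip_le wells(1) in simp)
      define z where "z = (\<lambda>a b. (1 - \<alpha>/2) * \<phi>hat n a b + (\<alpha>/2) * \<phi> (n-1) a b)"
      have z: "\<bar>z i j\<bar> \<le> \<beta>" for i j
        unfolding z_def using abs_convex_comb_le[OF hat prev[of "n-1"], of "\<alpha>/2"] alpha n by simp
      define W where "W = V (gh F (L / real M) M z (R (n-1)))"
      show ?thesis
      proof (rule Dcaputo_step_abs_bound[OF alpha tmono ratio n _ _ f_bound z prev _ M _ _ kappa0 m h])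
        show "Dcaputo t \<alpha> \<phi> n i j =
            m * (\<epsilon>^2 * glap (L / real M) (\<lambda>x y. (1 - \<alpha>/2) * \<phi> n x y + (\<alpha>/2) * \<phi> (n-1) x y) i j
              + W * f (z i j) - \<kappa> * W * (((1 - \<alpha>/2) * \<phi> n i j + (\<alpha>/2) * \<phi> (n-1) i j) - z i j))"
          for i j using scheme_phi n unfolding Let_def z_def W_def by auto
      qed (use taun grid_phi Vbound n eps in \<open>auto simp: W_def\<close>)
    qed
  qed
  then show ?thesis unfolding gsup_le_iff[OF M] by simp
qed

end
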